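(* For an ensemble $\mathcal{E}=\{\eta_{i},\rho_{i}\}_{i\in\mathbb{N}_{n}}$ and $x\in\mathbb{N}_{n}$, $$\mathbb{M}_{x}(\mathcal{E})=\{E\in\mathbb{H}_{+}\mid E\,\Pi_{x}(\mathcal{E})=\mathbb{O}\},\qquad \mathbb{M}_{x}^{*}(\mathcal{E})=\{E\in\mathbb{H}\mid \Pi_{x}^{\bot}(\mathcal{E})E\Pi_{x}^{\bot}(\mathcal{E})\in\mathbb{H}_{+}\},$$ where $\Pi_{x}(\mathcal{E})$ and $\Pi_{x}^{\bot}(\mathcal{E})$ are the orthogonal projections onto the support and the kernel of $\mathcal{C}_{x}(\mathcal{E})\rho_{0}-\eta_{x}\rho_{x}$, respectively, and $\mathbb{O}$ is the zero operator.
   Context: $\mathbb{N}_{n}=\{1,\ldots,n\}$. $\mathcal{H}$ is a finite-dimensional complex Hilbert space, $\mathbb{H}$ the Hermitian operators on it, $\mathbb{H}_{+}$ the positive-semidefinite ones. An ensemble $\{\eta_{i},\rho_{i}\}_{i\in\mathbb{N}_{n}}$: density operators $\rho_i$ with probabilities $\eta_i>0$ summing to $1$; $\rho_0=\sum_i\eta_i\rho_i$. A measurement is $\{M_{?}\}\cup\{M_{i}\}_{i\in\mathbb{N}_{n}}\subseteq\mathbb{H}_+$ summing to the identity. $\mathcal{C}_{x}(\mathcal{E})$ is the maximum of $\eta_{x}\Tr(\rho_{x}M_{x})/\Tr(\rho_{0}M_{x})$ over measurements with $\Tr(\rho_{0}M_{x})>0$. $\mathbb{M}_{x}(\mathcal{E})=\{E\in\mathbb{H}_{+}\mid\Tr[(\mathcal{C}_{x}(\mathcal{E})\rho_{0}-\eta_{x}\rho_{x})E]=0\}$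 and $\mathbb{M}_{x}^{*}(\mathcal{E})=\{E\in\mathbb{H}\mid\Tr(EF)\ge0\ \forall F\in\mathbb{M}_{x}(\mathcal{E})\}$. *)

theory Defs
  imports "HOL-Analysis.Analysis"
begin

definition cinner :: "complex^'d \<Rightarrow> complex^'d \<Rightarrow> complex" where
  "cinner v w = (\<Sum>i\<in>UNIV. cnj (v $ i) * w $ i)"

definition adjoint_mat :: "complex^'d^'d \<Rightarrow> complex^'d^'d" where
  "adjoint_mat A = (\<chi> i j. cnj (A $ j $ i))"

definition hermitian :: "complex^'d^'d \<Rightarrow> bool" where
  "hermitian A \<longleftrightarrow> adjoint_mat A = A"

definition psd :: "complex^'d^'d \<Rightarrow> bool" where
  "psd A \<longleftrightarrow> hermitian A \<and> (\<forall>v. 0 \<le> Re (cinner v (A *v v)))"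

definition density :: "complex^'d^'d \<Rightarrow> bool" where
  "density A \<longleftrightarrow> psd A \<and> trace A = 1"

definition kernel_op :: "complex^'d^'d \<Rightarrow> (complex^'d) set" where
  "kernel_op A = {v. A *v v = 0}"

definition support_op :: "complex^'d^'d \<Rightarrow> (complex^'d) set" where
  "support_op A = {v. \<forall>w\<in>kernel_op A. cinner w v = 0}"

definition is_orth_proj :: "complex^'d^'d \<Rightarrow> (complex^'d) set \<Rightarrow> bool" where
  "is_orth_proj P S \<longleftrightarrow> hermitian P \<and> P ** P = P \<and> range ((*v) P) = S"

definition orth_proj :: "(complex^'d) set \<Rightarrow> complex^'d^'d" where
  "orth_proj S = (THE P. is_orth_proj P S)"

definition ensemble :: "nat \<Rightarrow> (nat \<Rightarrow> real) \<Rightarrow> (nat \<Rightarrow> complex^'d^'d) \<Rightarrow> bool" where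
  "ensemble n \<eta> \<rho> \<longleftrightarrow> (\<forall>i\<in>{1..n}. \<eta> i > 0 \<and> density (\<rho> i)) \<and> (\<Sum>i=1..n. \<eta> i) = 1"

definition rho0 :: "nat \<Rightarrow> (nat \<Rightarrow> real) \<Rightarrow> (nat \<Rightarrow> complex^'d^'d) \<Rightarrow> complex^'d^'d" where
  "rho0 n \<eta> \<rho> = (\<Sum>i=1..n. \<eta> i *\<^sub>R \<rho> i)"

text \<open>Measurement {M?} \<union> {M i}, i in {1..n}.\<close>
definition measurement :: "nat \<Rightarrow> complex^'d^'d \<Rightarrow> (nat \<Rightarrow> complex^'d^'d) \<Rightarrow> bool" where
  "measurement n Mq M \<longleftrightarrow> psd Mq \<and> (\<forall>i\<in>{1..n}. psd (M i)) \<and> Mq + (\<Sum>i=1..n. M i) = mat 1"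

definition Cx :: "nat \<Rightarrow> (nat \<Rightarrow> real) \<Rightarrow> (nat \<Rightarrow> complex^'d^'d) \<Rightarrow> nat \<Rightarrow> real" where
  "Cx n \<eta> \<rho> x = Sup {\<eta> x * Re (trace (\<rho> x ** M x)) / Re (trace (rho0 n \<eta> \<rho> ** M x)) | Mq M.
      measurement n Mq M \<and> Re (trace (rho0 n \<eta> \<rho> ** M x)) > 0}"

definition Dx :: "nat \<Rightarrow> (nat \<Rightarrow> real) \<Rightarrow> (nat \<Rightarrow> complex^'d^'d) \<Rightarrow> nat \<Rightarrow> complex^'d^'d" where
  "Dx n \<eta> \<rho> x = Cx n \<eta> \<rho> x *\<^sub>R rho0 n \<eta> \<rho> - \<eta> x *\<^sub>R \<rho> x"

definition Mset :: "nat \<Rightarrow> (nat \<Rightarrow> real) \<Rightarrow> (nat \<Rightarrow> complex^'d^'d) \<Rightarrow> nat \<Rightarrow> (complex^'d^'d) set" where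
  "Mset n \<eta> \<rho> x = {E. psd E \<and> trace (Dx n \<eta> \<rho> x ** E) = 0}"

definition Mdual :: "nat \<Rightarrow> (nat \<Rightarrow> real) \<Rightarrow> (nat \<Rightarrow> complex^'d^'d) \<Rightarrow> nat \<Rightarrow> (complex^'d^'d) set" where
  "Mdual n \<eta> \<rho> x = {E. hermitian E \<and> (\<forall>F\<in>Mset n \<eta> \<rho> x. 0 \<le> Re (trace (E ** F)))}"

end

theory Submission
  imports Defs
begin

(* The operator D = C_x rho_0 - eta_x rho_x is positive semidefinite: testing C_x on the
   two-outcome measurement whose x-th element is the normalised projector onto v bounds the
   ratio of the quadratic forms of eta_x rho_x and rho_0 at every v.
   Every positive semidefinite F is a sum of rank-one terms w w^* (Cholesky elimination),
   so Tr(D F) is a sum of the nonnegative numbers <w, D w>; hence it vanishes iff D F = 0,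
   i.e. iff P F = F for the orthogonal projection P onto ker D, which for Hermitian F means
   F (1 - P) = 0, with 1 - P the projection onto the support of D.
   The elements F of M_x thus satisfy F = P F P, so Tr(E F) = Tr((P E P) F): E lies in the
   dual cone if P E P is positive semidefinite, and conversely testing E on the elements
   (P v)(P v)^* of M_x shows <v, P E P v> >= 0.
   Projections onto ker D exist by Gram-Schmidt orthogonalisation of the rows of D. *)

definition outer :: "complex^'d \<Rightarrow> complex^'d \<Rightarrow> complex^'d^'d" where
  "outer u w = (\<chi> i j. u $ i * cnj (w $ j))"

lemma cinner_add_right: "cinner u (v + w) = cinner u v + cinner u w"
  by (simp add: cinner_def sum.distrib distrib_left)

lemma cinner_add_left: "cinner (u + v) w = cinner u w + cinner v w"
  by (simp add: cinner_def sum.distrib distrib_right)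

lemma cinner_diff_right: "cinner u (v - w) = cinner u v - cinner u w"
  by (simp add: cinner_def sum_subtractf right_diff_distrib)

lemma cinner_scale_right: "cinner u (c *s v) = c * cinner u v"
  by (simp add: cinner_def sum_distrib_left mult_ac)

lemma cinner_scale_left: "cinner (c *s u) v = cnj c * cinner u v"
  by (simp add: cinner_def sum_distrib_left mult_ac)

lemma cinner_zero_right [simp]: "cinner u 0 = 0"
  by (simp add: cinner_def)

lemma cinner_zero_left [simp]: "cinner 0 u = 0"
  by (simp add: cinner_def)

lemma cinner_commute: "cinner v w = cnj (cinner w v)"
  by (simp add: cinner_def mult.commute)

lemma cinner_self: "cinner v v = of_real (\<Sum>i\<in>UNIV. (cmod (v $ i))\<^sup>2)"
  unfolding cinner_def of_real_sum
  by (intro sum.cong refl) (metis complex_norm_square mult.commute)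

lemma cinner_self_Re_nonneg: "0 \<le> Re (cinner v v)"
  by (simp add: cinner_self sum_nonneg)

lemma cinner_self_eq_0: "cinner v v = 0 \<longleftrightarrow> v = 0"
proof
  assume "cinner v v = 0"
  then have "\<forall>i\<in>UNIV. (cmod (v $ i))\<^sup>2 = 0"
    unfolding cinner_self of_real_eq_0_iff by (subst (asm) sum_nonneg_eq_0_iff) auto
  then show "v = 0" by (simp add: vec_eq_iff)
qed (simp add: cinner_def)

lemma cinner_self_pos: "v \<noteq> 0 \<Longrightarrow> 0 < Re (cinner v v)"
  by (metis Re_complex_of_real cinner_self cinner_self_Re_nonneg cinner_self_eq_0 of_real_0
      order_le_less)

lemma cinner_ext: "(\<And>u. cinner u a = cinner u b) \<Longrightarrow> a = b"
  by (metis cinner_diff_right cinner_self_eq_0 eq_iff_diff_eq_0)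

lemma cinner_adjoint: "cinner u (A *v v) = cinner (adjoint_mat A *v u) v"
proof -
  have "cinner u (A *v v) = (\<Sum>i\<in>UNIV. \<Sum>j\<in>UNIV. cnj (u $ i) * A $ i $ j * v $ j)"
    by (simp add: cinner_def matrix_vector_mult_def sum_distrib_left mult.assoc)
  also have "\<dots> = (\<Sum>j\<in>UNIV. \<Sum>i\<in>UNIV. cnj (u $ i) * A $ i $ j * v $ j)"
    by (rule sum.swap)
  also have "\<dots> = cinner (adjoint_mat A *v u) v"
    by (simp add: cinner_def matrix_vector_mult_def adjoint_mat_def sum_distrib_left mult_ac)
  finally show ?thesis .
qed

lemma hermitian_cinner: "hermitian A \<Longrightarrow> cinner u (A *v v) = cinner (A *v u) v"
  by (metis cinner_adjoint hermitian_def)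

lemma hermitian_form_real: "hermitian A \<Longrightarrow> cinner v (A *v v) = of_real (Re (cinner v (A *v v)))"
  by (metis Reals_cnj_iff cinner_commute hermitian_cinner of_real_Re)

lemma adjoint_mat_mult: "adjoint_mat (A ** B) = adjoint_mat B ** adjoint_mat A"
  by (simp add: adjoint_mat_def matrix_matrix_mult_def vec_eq_iff mult.commute)

lemma adjoint_mat_adjoint_mat [simp]: "adjoint_mat (adjoint_mat A) = A"
  by (simp add: adjoint_mat_def vec_eq_iff)

lemma adjoint_outer: "adjoint_mat (outer u w) = outer w u"
  by (simp add: adjoint_mat_def outer_def vec_eq_iff mult.commute)

lemma hermitian_mat_1: "hermitian (mat 1)"
  by (simp add: hermitian_def adjoint_mat_def mat_def vec_eq_iff)

lemma hermitian_add: "hermitian A \<Longrightarrow> hermitian B \<Longrightarrow> hermitian (A + B)"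
  by (simp add: hermitian_def adjoint_mat_def vec_eq_iff)

lemma hermitian_diff: "hermitian A \<Longrightarrow> hermitian B \<Longrightarrow> hermitian (A - B)"
  by (simp add: hermitian_def adjoint_mat_def vec_eq_iff)

lemma hermitian_scaleR: "hermitian A \<Longrightarrow> hermitian (c *\<^sub>R A)"
  by (simp add: hermitian_def adjoint_mat_def vec_eq_iff)

lemma hermitian_outer: "hermitian (outer w w)"
  by (simp add: hermitian_def adjoint_outer)

lemma hermitian_sandwich: "hermitian P \<Longrightarrow> hermitian E \<Longrightarrow> hermitian (P ** E ** P)"
  by (simp add: hermitian_def adjoint_mat_mult matrix_mul_assoc)

lemma matrix_mult_diff_right: "A ** (B - C) = A ** B - A ** (C :: complex^'d^'d)"
  by (simp add: matrix_matrix_mult_def vec_eq_iff sum_subtractf right_diff_distrib)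

lemma matrix_mult_diff_left: "(A - B) ** C = A ** C - B ** (C :: complex^'d^'d)"
  by (simp add: matrix_matrix_mult_def vec_eq_iff sum_subtractf left_diff_distrib)

lemma matrix_mult_sum_right: "(A::complex^'d^'d) ** sum f S = (\<Sum>k\<in>S. A ** f k)"
  unfolding vec_eq_iff matrix_matrix_mult_def
  by (simp only: vec_lambda_beta sum_component sum_distrib_left) (intro allI sum.swap)

lemma trace_sum: "trace (sum f S) = (\<Sum>k\<in>S. trace (f k :: complex^'d^'d))"
  unfolding trace_def by (simp only: sum_component) (rule sum.swap)

lemma outer_mult_vec: "outer u w *v v = cinner w v *s u"
  by (simp add: outer_def cinner_def matrix_vector_mult_def vector_scalar_mult_def
      vec_eq_iff sum_distrib_left mult_ac)

lemma matrix_mult_outer: "A ** outer u w = outer (A *v u) w"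
  by (simp add: outer_def matrix_matrix_mult_def matrix_vector_mult_def vec_eq_iff
      sum_distrib_left mult_ac)

lemma outer_zero_left [simp]: "outer 0 w = 0"
  by (simp add: outer_def vec_eq_iff)

lemma outer_scale_real: "outer (of_real r *s f) (of_real r *s f) = r\<^sup>2 *\<^sub>R outer f f"
  by (simp add: outer_def vec_eq_iff scaleR_conv_of_real[where 'a=complex] power2_eq_square
      mult_ac)

lemma trace_mult_outer: "trace (A ** outer w w) = cinner w (A *v w)"
  by (simp add: trace_def outer_def cinner_def matrix_matrix_mult_def matrix_vector_mult_def
      sum_distrib_left mult_ac)

lemma scaleR_mult_vec: "(c *\<^sub>R A) *v v = of_real c *s (A *v v)"
  for A :: "complex^'d^'d"
  by (simp add: matrix_vector_mult_def vector_scalar_mult_def vec_eq_iff sum_distrib_left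
      scaleR_conv_of_real[where 'a=complex] mult_ac)

lemma trace_scaleR: "trace (c *\<^sub>R A) = c *\<^sub>R trace A"
  for A :: "complex^'d^'d"
  by (simp add: trace_def scaleR_sum_right)

lemma psd_hermitian: "psd A \<Longrightarrow> hermitian A"
  by (simp add: psd_def)

lemma psd_form_nonneg: "psd A \<Longrightarrow> 0 \<le> Re (cinner v (A *v v))"
  by (simp add: psd_def)

lemma psd_0: "psd (0 :: complex^'d^'d)"
  by (simp add: psd_def hermitian_def adjoint_mat_def vec_eq_iff)

lemma psd_mat_1: "psd (mat 1)"
  by (simp add: psd_def hermitian_mat_1 cinner_self_Re_nonneg)

lemma psd_outer: "psd (outer w w)"
proof -
  have "cinner v (outer w w *v v) = cinner w v * cnj (cinner w v)" for v
    by (simp add: outer_mult_vec cinner_scale_right mult.commute cinner_commute[of v w])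
  then show ?thesis
    by (simp add: psd_def hermitian_outer)
qed

lemma psd_add: "psd A \<Longrightarrow> psd B \<Longrightarrow> psd (A + B)"
  by (simp add: psd_def hermitian_add matrix_vector_mult_add_rdistrib cinner_add_right)

lemma psd_scaleR: "psd A \<Longrightarrow> 0 \<le> c \<Longrightarrow> psd (c *\<^sub>R A)"
  by (simp add: psd_def hermitian_scaleR scaleR_mult_vec cinner_scale_right)

lemma psd_sum: "(\<And>k. k \<in> S \<Longrightarrow> psd (f k)) \<Longrightarrow> psd (sum f S)"
  by (induction S rule: infinite_finite_induct) (simp_all add: psd_0 psd_add)

lemma cinner_form_add_scaled:
  "cinner (v + t *s e) (F *v (v + t *s e)) = cinner v (F *v v) + t * cinner v (F *v e)
     + cnj t * cinner e (F *v v) + cnj t * t * cinner e (F *v e)"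
  by (simp add: matrix_vector_right_distrib vector_scalar_commute cinner_add_left
      cinner_add_right cinner_scale_left cinner_scale_right algebra_simps)

lemma nonneg_quadratic_imp_linear_coeff_eq_0:
  fixes b N :: real
  assumes "0 \<le> b" and "\<And>s. 0 \<le> s\<^sup>2 * b - 2 * s * N"
  shows "N = 0"
proof -
  have "0 \<le> (N / (b + 1))\<^sup>2 * b - 2 * (N / (b + 1)) * N" by (rule assms(2))
  also have "\<dots> = - (N\<^sup>2 * (b + 2)) / (b + 1)\<^sup>2"
    using assms(1) by (simp add: power2_eq_square divide_simps) (simp add: algebra_simps)
  finally have "N\<^sup>2 * (b + 2) \<le> 0"
    using assms(1) by (simp add: divide_le_0_iff)
  then show ?thesis
    using assms(1) by (simp add: mult_le_0_iff)
qed

lemma psd_form_eq_0_imp_mult_vec_eq_0: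
  assumes A: "psd A" and w: "Re (cinner w (A *v w)) = 0"
  shows "A *v w = 0"
proof -
  define u where "u = A *v w"
  have wu: "cinner w (A *v u) = cinner u u"
    using hermitian_cinner[OF psd_hermitian[OF A], of w u] by (simp add: u_def)
  have "0 \<le> s\<^sup>2 * Re (cinner u (A *v u)) - 2 * s * Re (cinner u u)" for s :: real
  proof -
    have "0 \<le> Re (cinner (w + (- of_real s) *s u) (A *v (w + (- of_real s) *s u)))"
      using A by (rule psd_form_nonneg)
    also have "\<dots> = s\<^sup>2 * Re (cinner u (A *v u)) - 2 * s * Re (cinner u u)"
      unfolding cinner_form_add_scaled wu using w by (simp add: u_def power2_eq_square)
    finally show ?thesis .
  qed
  then have "Re (cinner u u) = 0"
    by (rule nonneg_quadratic_imp_linear_coeff_eq_0[OF psd_form_nonneg[OF A]])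
  then show ?thesis
    using cinner_self_pos[of u] by (auto simp: u_def)
qed

lemma psd_schur_complement:
  assumes F: "psd F" and a: "a = Re (cinner e (F *v e))" "0 < a"
  shows "psd (F - (1 / a) *\<^sub>R outer (F *v e) (F *v e))"
proof -
  have H: "hermitian F" using F by (rule psd_hermitian)
  define f where "f = F *v e"
  have "0 \<le> Re (cinner v ((F - (1 / a) *\<^sub>R outer f f) *v v))" for v
  proof -
    define q where "q = cinner e (F *v v)"
    define t where "t = - q / of_real a"
    have fv: "cinner f v = q" using hermitian_cinner[OF H, of e v] by (simp add: f_def q_def)
    have ve: "cinner v (F *v e) = cnj q"
      by (metis cinner_commute hermitian_cinner[OF H] q_def)
    have ee: "cinner e (F *v e) = of_real a" using hermitian_form_real[OF H, of e] a by simp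
    \<comment> \<open>completing the square in the direction e\<close>
    have "cinner v ((F - (1 / a) *\<^sub>R outer f f) *v v)
        = cinner v (F *v v) - of_real (1 / a) * (q * cnj q)"
      by (simp add: matrix_vector_mult_diff_rdistrib cinner_diff_right scaleR_mult_vec
          outer_mult_vec cinner_scale_right fv cinner_commute[of v f] mult_ac)
    also have "\<dots> = cinner (v + t *s e) (F *v (v + t *s e))"
      unfolding cinner_form_add_scaled ee ve q_def[symmetric] using a(2)
      by (simp add: t_def field_simps)
    finally show ?thesis using F by (simp add: psd_form_nonneg)
  qed
  then show ?thesis
    by (simp add: psd_def f_def hermitian_diff hermitian_scaleR H hermitian_outer)
qed

lemma psd_peel_outer:
  assumes F: "psd F"
  obtains f where "psd (F - outer f f)" and "(F - outer f f) *v e = 0"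
    and "\<And>v. F *v v = 0 \<Longrightarrow> (F - outer f f) *v v = 0"
proof (cases "Re (cinner e (F *v e)) = 0")
  case True
  then have "F *v e = 0" using F by (rule psd_form_eq_0_imp_mult_vec_eq_0[rotated])
  then show ?thesis using F by (intro that[of 0]) simp_all
next
  case False
  define a where "a = Re (cinner e (F *v e))"
  have a: "0 < a" using False psd_form_nonneg[OF F, of e] by (simp add: a_def)
  have H: "hermitian F" using F by (rule psd_hermitian)
  define f where "f = of_real (sqrt (1 / a)) *s (F *v e)"
  have f: "outer f f = (1 / a) *\<^sub>R outer (F *v e) (F *v e)"
    using a by (simp add: f_def outer_scale_real)
  have Fe: "cinner (F *v e) e = of_real a"
    using hermitian_cinner[OF H, of e e] hermitian_form_real[OF H, of e] by (simp add: a_def)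
  show ?thesis
  proof (rule that)
    show "psd (F - outer f f)"
      unfolding f using F a_def a by (rule psd_schur_complement)
    show "(F - outer f f) *v e = 0"
      using a by (simp add: f matrix_vector_mult_diff_rdistrib scaleR_mult_vec outer_mult_vec Fe
          vector_scalar_mult_def vec_eq_iff)
    fix v assume "F *v v = 0"
    then show "(F - outer f f) *v v = 0"
      using hermitian_cinner[OF H, of e v]
      by (simp add: f matrix_vector_mult_diff_rdistrib scaleR_mult_vec outer_mult_vec)
  qed
qed

lemma mult_vec_axis_component: "(F *v axis j 1) $ i = (F::complex^'d^'d) $ i $ j"
  by (simp add: matrix_vector_mult_def axis_def if_distrib if_distribR cong: if_cong)

lemma psd_eq_sum_outer_on:
  fixes F :: "complex^'d^'d"
  assumes "finite J" and "psd F" and "\<And>j. j \<notin> J \<Longrightarrow> F *v axis j 1 = 0"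
  shows "\<exists>w. F = (\<Sum>k\<in>J. outer (w k) (w k))"
  using assms
proof (induction J arbitrary: F rule: finite_induct)
  case empty
  then have "F = 0" by (simp add: vec_eq_iff flip: mult_vec_axis_component)
  then show ?case by simp
next
  case (insert j J)
  obtain f where psd: "psd (F - outer f f)" and j: "(F - outer f f) *v axis j 1 = 0"
    and ker: "\<And>v. F *v v = 0 \<Longrightarrow> (F - outer f f) *v v = 0"
    using psd_peel_outer[OF insert.prems(1), where e = "axis j 1"] by blast
  have "(F - outer f f) *v axis i 1 = 0" if "i \<notin> J" for i
    using j ker insert.prems(2) that by (cases "i = j") auto
  then obtain w where w: "F - outer f f = (\<Sum>k\<in>J. outer (w k) (w k))"
    using insert.IH[OF psd] by blast
  have "(\<Sum>k\<in>insert j J. outer ((w(j := f)) k) ((w(j := f)) k))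
      = outer f f + (\<Sum>k\<in>J. outer (w k) (w k))"
    using insert.hyps by (auto intro: sum.cong)
  also have "\<dots> = F" by (simp add: flip: w)
  finally show ?case by metis
qed

lemma psd_eq_sum_outer:
  fixes F :: "complex^'d^'d"
  assumes "psd F"
  obtains w :: "'d \<Rightarrow> complex^'d" where "F = (\<Sum>k\<in>UNIV. outer (w k) (w k))"
  using psd_eq_sum_outer_on[of UNIV F] assms by auto

lemma trace_mult_sum_outer:
  "trace (A ** (\<Sum>k\<in>S. outer (w k) (w k))) = (\<Sum>k\<in>S. cinner (w k) (A *v w k))"
  by (simp add: matrix_mult_sum_right trace_sum trace_mult_outer)

lemma psd_trace_mult_nonneg:
  fixes A F :: "complex^'d^'d"
  assumes "psd A" and "psd F"
  shows "0 \<le> Re (trace (A ** F))"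
proof -
  obtain w :: "'d \<Rightarrow> complex^'d" where "F = (\<Sum>k\<in>UNIV. outer (w k) (w k))"
    using psd_eq_sum_outer[OF assms(2)] .
  then show ?thesis
    using assms(1) by (simp add: trace_mult_sum_outer Re_sum sum_nonneg psd_form_nonneg)
qed

lemma psd_trace_mult_eq_0_iff:
  fixes D F :: "complex^'d^'d"
  assumes D: "psd D" and F: "psd F"
  shows "trace (D ** F) = 0 \<longleftrightarrow> D ** F = 0"
proof
  obtain w :: "'d \<Rightarrow> complex^'d" where w: "F = (\<Sum>k\<in>UNIV. outer (w k) (w k))"
    using psd_eq_sum_outer[OF F] .
  assume "trace (D ** F) = 0"
  then have "(\<Sum>k\<in>UNIV. Re (cinner (w k) (D *v w k))) = 0"
    by (simp add: w trace_mult_sum_outer flip: Re_sum)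
  then have "Re (cinner (w k) (D *v w k)) = 0" for k
    using D by (subst (asm) sum_nonneg_eq_0_iff) (auto simp: psd_form_nonneg)
  then have "D *v w k = 0" for k
    using D by (simp add: psd_form_eq_0_imp_mult_vec_eq_0)
  then show "D ** F = 0"
    by (simp add: w matrix_mult_sum_right matrix_mult_outer)
qed (simp add: trace_0[unfolded mat_0])

definition perp :: "(complex^'d) set \<Rightarrow> (complex^'d) set" where
  "perp W = {v. \<forall>w\<in>W. cinner w v = 0}"

lemma support_op_eq_perp_kernel: "support_op A = perp (kernel_op A)"
  by (simp add: support_op_def perp_def)

lemma kernel_op_eq_perp_rows: "kernel_op A = perp (range (\<lambda>i. \<chi> j. cnj (A $ i $ j)))"
  by (auto simp: kernel_op_def perp_def cinner_def matrix_vector_mult_def vec_eq_iff)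

lemma perp_insert: "perp (insert u W) = {v \<in> perp W. cinner u v = 0}"
  by (auto simp: perp_def)

lemma is_orth_proj_hermitian: "is_orth_proj P S \<Longrightarrow> hermitian P"
  by (simp add: is_orth_proj_def)

lemma is_orth_proj_in: "is_orth_proj P S \<Longrightarrow> P *v v \<in> S"
  by (auto simp: is_orth_proj_def)

lemma is_orth_proj_fixed:
  assumes "is_orth_proj P S" and "v \<in> S"
  shows "P *v v = v"
proof -
  obtain y where "v = P *v y" using assms by (auto simp: is_orth_proj_def)
  then show ?thesis using assms by (simp add: is_orth_proj_def matrix_vector_mul_assoc)
qed

lemma is_orth_proj_fixed_iff: "is_orth_proj P S \<Longrightarrow> P *v v = v \<longleftrightarrow> v \<in> S"
  by (metis is_orth_proj_fixed is_orth_proj_in)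

lemma is_orth_projI:
  assumes "hermitian P" and "\<And>v. P *v v \<in> S" and "\<And>v. v \<in> S \<Longrightarrow> P *v v = v"
  shows "is_orth_proj P S"
proof -
  have "P ** P = P"
    using assms(2,3) by (simp add: matrix_eq flip: matrix_vector_mul_assoc)
  moreover have "range ((*v) P) = S"
    using assms(2,3) by (auto simp: image_iff) metis
  ultimately show ?thesis
    using assms(1) by (simp add: is_orth_proj_def)
qed

lemma is_orth_proj_unique:
  assumes P: "is_orth_proj P S" and Q: "is_orth_proj Q S"
  shows "P = Q"
proof -
  have HP: "hermitian P" and HQ: "hermitian Q"
    using P Q by (simp_all add: is_orth_proj_hermitian)
  have "cinner u (P *v v) = cinner u (Q *v v)" for u v
  proof -
    have "cinner u (P *v v) = cinner u (Q *v (P *v v))"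
      by (simp add: is_orth_proj_fixed[OF Q is_orth_proj_in[OF P]])
    also have "\<dots> = cinner (P *v (Q *v u)) v"
      by (simp add: hermitian_cinner[OF HP] hermitian_cinner[OF HQ])
    also have "\<dots> = cinner u (Q *v v)"
      by (simp add: is_orth_proj_fixed[OF P is_orth_proj_in[OF Q]] hermitian_cinner[OF HQ])
    finally show ?thesis .
  qed
  then show ?thesis by (simp add: matrix_eq cinner_ext)
qed

lemma orth_proj_eq: "is_orth_proj P S \<Longrightarrow> orth_proj S = P"
  unfolding orth_proj_def using is_orth_proj_unique by blast

lemma is_orth_proj_restrict:
  assumes P: "is_orth_proj P S"
  shows "\<exists>P'. is_orth_proj P' {v \<in> S. cinner u v = 0}"
proof -
  have H: "hermitian P" using P by (rule is_orth_proj_hermitian)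
  define u' where "u' = P *v u"
  have u'_in: "u' \<in> S" using P by (simp add: u'_def is_orth_proj_in)
  have u'v: "cinner u' v = cinner u v" if "v \<in> S" for v
    by (metis P H hermitian_cinner is_orth_proj_fixed that u'_def)
  show ?thesis
  proof (cases "u' = 0")
    case True
    then have "{v \<in> S. cinner u v = 0} = S" using u'v by auto
    then show ?thesis using P by auto
  next
    case False
    define c where "c = Re (cinner u' u')"
    have c: "0 < c" "cinner u' u' = of_real c"
      using False cinner_self_pos hermitian_form_real[OF hermitian_mat_1, of u']
      by (auto simp: c_def)
    define P' where "P' = P - (1 / c) *\<^sub>R outer u' u'"
    \<comment> \<open>P' v is the projection of v minus a multiple of u, so it stays in the range of P\<close>
    have P'v: "P' *v v = P *v (v - (of_real (1 / c) * cinner u' v) *s u)" for v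
      by (simp add: P'_def matrix_vector_mult_diff_rdistrib matrix_vector_mult_diff_distrib
          scaleR_mult_vec outer_mult_vec vector_scalar_commute u'_def[symmetric] vec_eq_iff)
    have "is_orth_proj P' {v \<in> S. cinner u v = 0}"
    proof (rule is_orth_projI)
      show "hermitian P'"
        by (simp add: P'_def hermitian_diff hermitian_scaleR H hermitian_outer)
      fix v
      have in_S: "P' *v v \<in> S" by (simp add: P'v is_orth_proj_in[OF P])
      have "cinner u' u = cinner u' u'"
        using hermitian_cinner[OF H, of u u] u'v[OF u'_in] by (simp flip: u'_def)
      then have "cinner u' (P' *v v) = 0"
        using c by (simp add: P'v hermitian_cinner[OF H, of u'] is_orth_proj_fixed[OF P u'_in]
            cinner_diff_right cinner_scale_right flip: u'_def)
      then show "P' *v v \<in> {v \<in> S. cinner u v = 0}" using in_S u'v by simp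
    next
      fix v assume "v \<in> {v \<in> S. cinner u v = 0}"
      then show "P' *v v = v"
        using u'v is_orth_proj_fixed[OF P] by (simp add: P'v)
    qed
    then show ?thesis by blast
  qed
qed

lemma is_orth_proj_perp_exists: "finite W \<Longrightarrow> \<exists>P. is_orth_proj P (perp W)"
proof (induction W rule: finite_induct)
  case empty
  have "is_orth_proj (mat 1) (perp {})"
    by (rule is_orth_projI) (simp_all add: hermitian_mat_1 perp_def)
  then show ?case by blast
next
  case (insert u W)
  then show ?case
    unfolding perp_insert using is_orth_proj_restrict by blast
qed

lemma is_orth_proj_kernel_op_exists: "\<exists>P. is_orth_proj P (kernel_op A)"
  unfolding kernel_op_eq_perp_rows by (rule is_orth_proj_perp_exists) simp

lemma is_orth_proj_complement:
  assumes P: "is_orth_proj P S"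
  shows "is_orth_proj (mat 1 - P) (perp S)"
proof (rule is_orth_projI)
  have H: "hermitian P" using P by (rule is_orth_proj_hermitian)
  show "hermitian (mat 1 - P)" by (simp add: hermitian_diff hermitian_mat_1 H)
  fix v
  show "(mat 1 - P) *v v \<in> perp S"
    using is_orth_proj_fixed[OF P] hermitian_cinner[OF H]
    by (auto simp: perp_def matrix_vector_mult_diff_rdistrib cinner_diff_right)
next
  fix v assume v: "v \<in> perp S"
  have H: "hermitian P" using P by (rule is_orth_proj_hermitian)
  have "cinner (P *v v) (P *v v) = cinner (P *v v) v"
    by (simp add: hermitian_cinner[OF H, symmetric] is_orth_proj_fixed[OF P is_orth_proj_in[OF P]])
  also have "\<dots> = 0" using v is_orth_proj_in[OF P] by (simp add: perp_def)
  finally have "P *v v = 0" by (simp add: cinner_self_eq_0)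
  then show "(mat 1 - P) *v v = v" by (simp add: matrix_vector_mult_diff_rdistrib)
qed

lemma is_orth_proj_mult_eq_self_iff:
  "is_orth_proj P S \<Longrightarrow> P ** E = E \<longleftrightarrow> (\<forall>v. E *v v \<in> S)"
  by (simp add: matrix_eq is_orth_proj_fixed_iff flip: matrix_vector_mul_assoc)

lemma is_orth_proj_mult_complement_eq_0_iff:
  assumes "is_orth_proj P S" and "hermitian E"
  shows "E ** (mat 1 - P) = 0 \<longleftrightarrow> P ** E = E"
proof -
  have "E ** (mat 1 - P) = 0 \<longleftrightarrow> E ** P = E"
    by (auto simp: matrix_mult_diff_right)
  also have "\<dots> \<longleftrightarrow> adjoint_mat (P ** E) = adjoint_mat E"
    using assms is_orth_proj_hermitian[OF assms(1)] by (simp add: adjoint_mat_mult hermitian_def)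
  also have "\<dots> \<longleftrightarrow> P ** E = E"
    by (metis adjoint_mat_adjoint_mat)
  finally show ?thesis .
qed

lemma ensemble_psd: "ensemble n \<eta> \<rho> \<Longrightarrow> i \<in> {1..n} \<Longrightarrow> psd (\<rho> i)"
  by (simp add: ensemble_def density_def)

lemma ensemble_pos: "ensemble n \<eta> \<rho> \<Longrightarrow> i \<in> {1..n} \<Longrightarrow> 0 < \<eta> i"
  by (simp add: ensemble_def)

lemma psd_rho0_minus:
  assumes E: "ensemble n \<eta> \<rho>" and x: "x \<in> {1..n}"
  shows "psd (rho0 n \<eta> \<rho> - \<eta> x *\<^sub>R \<rho> x)"
proof -
  have "rho0 n \<eta> \<rho> - \<eta> x *\<^sub>R \<rho> x = (\<Sum>i\<in>{1..n} - {x}. \<eta> i *\<^sub>R \<rho> i)"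
    unfolding rho0_def using x by (simp add: sum.remove)
  also have "psd \<dots>"
    using E by (intro psd_sum psd_scaleR) (auto simp: ensemble_psd less_imp_le ensemble_pos)
  finally show ?thesis .
qed

lemma psd_rho0: "ensemble n \<eta> \<rho> \<Longrightarrow> psd (rho0 n \<eta> \<rho>)"
  unfolding rho0_def by (intro psd_sum psd_scaleR) (auto simp: ensemble_psd less_imp_le ensemble_pos)

lemma trace_mult_le_trace_rho0_mult:
  assumes "ensemble n \<eta> \<rho>" and "x \<in> {1..n}" and "psd M"
  shows "\<eta> x * Re (trace (\<rho> x ** M)) \<le> Re (trace (rho0 n \<eta> \<rho> ** M))"
  using psd_trace_mult_nonneg[OF psd_rho0_minus[OF assms(1,2)] assms(3)]
  by (simp add: matrix_mult_diff_left trace_sub trace_scaleR flip: scalar_matrix_assoc)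

lemma ratio_le_Cx:
  assumes E: "ensemble n \<eta> \<rho>" and x: "x \<in> {1..n}"
    and M: "measurement n Mq M" and pos: "0 < Re (trace (rho0 n \<eta> \<rho> ** M x))"
  shows "\<eta> x * Re (trace (\<rho> x ** M x)) / Re (trace (rho0 n \<eta> \<rho> ** M x)) \<le> Cx n \<eta> \<rho> x"
  unfolding Cx_def
proof (rule cSup_upper)
  show "bdd_above {\<eta> x * Re (trace (\<rho> x ** M x)) / Re (trace (rho0 n \<eta> \<rho> ** M x)) | Mq M.
      measurement n Mq M \<and> 0 < Re (trace (rho0 n \<eta> \<rho> ** M x))}"
  proof (rule bdd_aboveI[of _ 1], clarify)
    fix Mq M assume "measurement n Mq M" and "0 < Re (trace (rho0 n \<eta> \<rho> ** M x))"
    then show "\<eta> x * Re (trace (\<rho> x ** M x)) / Re (trace (rho0 n \<eta> \<rho> ** M x)) \<le> 1"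
      using trace_mult_le_trace_rho0_mult[OF E x] x by (simp add: measurement_def)
  qed
qed (use M pos in blast)

lemma measurement_rank_one:
  assumes "x \<in> {1..n}" and "v \<noteq> 0"
  defines "T \<equiv> (1 / Re (cinner v v)) *\<^sub>R outer v v"
  shows "measurement n (mat 1 - T) (\<lambda>i. if i = x then T else 0)"
proof -
  have a: "0 < Re (cinner v v)" using assms(2) by (rule cinner_self_pos)
  have "psd (mat 1 - T)"
    using psd_schur_complement[OF psd_mat_1, of _ v] a by (simp add: T_def)
  moreover have "psd T" using a by (simp add: T_def psd_scaleR psd_outer)
  ultimately show ?thesis
    using assms(1) by (simp add: measurement_def psd_0 sum.delta)
qed

lemma form_ratio_le_Cx:
  assumes E: "ensemble n \<eta> \<rho>" and x: "x \<in> {1..n}"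
    and pos: "0 < Re (cinner v (rho0 n \<eta> \<rho> *v v))"
  shows "\<eta> x * Re (cinner v (\<rho> x *v v)) / Re (cinner v (rho0 n \<eta> \<rho> *v v)) \<le> Cx n \<eta> \<rho> x"
proof -
  have "v \<noteq> 0" using pos by auto
  define a where "a = Re (cinner v v)"
  have a: "0 < a" using \<open>v \<noteq> 0\<close> by (simp add: a_def cinner_self_pos)
  define T where "T = (1 / a) *\<^sub>R outer v v"
  have tr: "Re (trace (A ** T)) = Re (cinner v (A *v v)) / a" for A
    by (simp add: T_def matrix_scalar_ac trace_scaleR trace_mult_outer flip: scalar_matrix_assoc)
  have "measurement n (mat 1 - T) (\<lambda>i. if i = x then T else 0)"
    unfolding T_def a_def using x \<open>v \<noteq> 0\<close> by (rule measurement_rank_one)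
  from ratio_le_Cx[OF E x this] show ?thesis
    using pos a by (simp add: tr)
qed

lemma psd_Dx:
  assumes E: "ensemble n \<eta> \<rho>" and x: "x \<in> {1..n}"
  shows "psd (Dx n \<eta> \<rho> x)"
proof -
  have "0 \<le> Re (cinner v (Dx n \<eta> \<rho> x *v v))" for v
  proof -
    define r0 where "r0 = Re (cinner v (rho0 n \<eta> \<rho> *v v))"
    define rx where "rx = Re (cinner v (\<rho> x *v v))"
    have form: "Re (cinner v (Dx n \<eta> \<rho> x *v v)) = Cx n \<eta> \<rho> x * r0 - \<eta> x * rx"
      by (simp add: Dx_def matrix_vector_mult_diff_rdistrib scaleR_mult_vec cinner_diff_right
          cinner_scale_right r0_def rx_def)
    have le: "\<eta> x * rx \<le> r0"
      using trace_mult_le_trace_rho0_mult[OF E x psd_outer[of v]]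
      by (simp add: trace_mult_outer r0_def rx_def)
    have "0 \<le> rx" using ensemble_psd[OF E x] by (simp add: psd_form_nonneg rx_def)
    moreover have "0 \<le> r0" using psd_rho0[OF E] by (simp add: psd_form_nonneg r0_def)
    moreover have "0 < \<eta> x" using E x by (rule ensemble_pos)
    moreover have "0 < r0 \<Longrightarrow> \<eta> x * rx \<le> Cx n \<eta> \<rho> x * r0"
      using form_ratio_le_Cx[OF E x] by (simp add: r0_def rx_def divide_le_eq)
    ultimately show ?thesis
      using le by (cases "r0 = 0") (auto simp: form mult_le_0_iff)
  qed
  moreover have "hermitian (Dx n \<eta> \<rho> x)"
    using psd_rho0[OF E] ensemble_psd[OF E x]
    by (simp add: Dx_def hermitian_diff hermitian_scaleR psd_hermitian)
  ultimately show ?thesis by (simp add: psd_def)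
qed

lemma trace_mult_sandwich:
  fixes P E F :: "complex^'d^'d"
  assumes "P ** F = F" and "F ** P = F"
  shows "trace (E ** F) = trace ((P ** E ** P) ** F)"
proof -
  have "trace ((P ** E ** P) ** F) = trace (P ** (E ** F))"
    using assms(1) by (simp flip: matrix_mul_assoc)
  also have "\<dots> = trace (E ** F)"
    using assms(2) by (simp add: trace_mul_sym[of P] flip: matrix_mul_assoc)
  finally show ?thesis by simp
qed

lemma Mset_eq_kernel_proj_fixed:
  assumes E: "ensemble n \<eta> \<rho>" and x: "x \<in> {1..n}"
    and P: "is_orth_proj P (kernel_op (Dx n \<eta> \<rho> x))"
  shows "Mset n \<eta> \<rho> x = {E. psd E \<and> P ** E = E}"
proof -
  have "trace (Dx n \<eta> \<rho> x ** F) = 0 \<longleftrightarrow> P ** F = F" if "psd F" for F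
  proof -
    have "trace (Dx n \<eta> \<rho> x ** F) = 0 \<longleftrightarrow> Dx n \<eta> \<rho> x ** F = 0"
      using psd_Dx[OF E x] that by (rule psd_trace_mult_eq_0_iff)
    also have "\<dots> \<longleftrightarrow> (\<forall>v. F *v v \<in> kernel_op (Dx n \<eta> \<rho> x))"
      by (simp add: matrix_eq kernel_op_def flip: matrix_vector_mul_assoc)
    also have "\<dots> \<longleftrightarrow> P ** F = F"
      using P by (simp add: is_orth_proj_mult_eq_self_iff)
    finally show ?thesis .
  qed
  then show ?thesis by (auto simp: Mset_def)
qed

lemma Mdual_eq_kernel_proj_sandwich_psd:
  fixes P :: "complex^'d^'d"
  assumes E: "ensemble n \<eta> \<rho>" and x: "x \<in> {1..n}"
    and P: "is_orth_proj P (kernel_op (Dx n \<eta> \<rho> x))"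
  shows "Mdual n \<eta> \<rho> x = {E. hermitian E \<and> psd (P ** E ** P)}"
proof -
  have HP: "hermitian P" using P by (rule is_orth_proj_hermitian)
  have "(\<forall>F\<in>Mset n \<eta> \<rho> x. 0 \<le> Re (trace (E ** F))) \<longleftrightarrow> psd (P ** E ** P)"
    if HE: "hermitian E" for E
  proof
    assume dual: "\<forall>F\<in>Mset n \<eta> \<rho> x. 0 \<le> Re (trace (E ** F))"
    have "outer (P *v v) (P *v v) \<in> Mset n \<eta> \<rho> x" for v
      using is_orth_proj_fixed[OF P is_orth_proj_in[OF P]]
      by (simp add: Mset_eq_kernel_proj_fixed[OF E x P] psd_outer matrix_mult_outer)
    moreover have "cinner v ((P ** E ** P) *v v) = trace (E ** outer (P *v v) (P *v v))" for v
      by (simp add: trace_mult_outer hermitian_cinner[OF HP] flip: matrix_vector_mul_assoc)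
    ultimately have "0 \<le> Re (cinner v ((P ** E ** P) *v v))" for v
      using dual by simp
    then show "psd (P ** E ** P)"
      using HE HP by (simp add: psd_def hermitian_sandwich)
  next
    assume psd: "psd (P ** E ** P)"
    show "\<forall>F\<in>Mset n \<eta> \<rho> x. 0 \<le> Re (trace (E ** F))"
    proof
      fix F assume "F \<in> Mset n \<eta> \<rho> x"
      then have F: "psd F" "P ** F = F" by (simp_all add: Mset_eq_kernel_proj_fixed[OF E x P])
      have "F ** P = adjoint_mat (P ** F)"
        using HP psd_hermitian[OF F(1)] by (simp add: adjoint_mat_mult hermitian_def)
      then have "F ** P = F"
        using F psd_hermitian[OF F(1)] by (simp add: hermitian_def)
      with F(2) have "trace (E ** F) = trace ((P ** E ** P) ** F)"
        by (rule trace_mult_sandwich)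
      then show "0 \<le> Re (trace (E ** F))"
        using psd_trace_mult_nonneg[OF psd F(1)] by simp
    qed
  qed
  then show ?thesis by (auto simp: Mdual_def)
qed

theorem lemma2:
  fixes \<eta> :: "nat \<Rightarrow> real" and \<rho> :: "nat \<Rightarrow> complex^'d^'d" and n x :: nat
  assumes "ensemble n \<eta> \<rho>" and "x \<in> {1..n}"
  shows "Mset n \<eta> \<rho> x = {E. psd E \<and> E ** orth_proj (support_op (Dx n \<eta> \<rho> x)) = 0}
     \<and> Mdual n \<eta> \<rho> x = {E. hermitian E \<and>
           psd (orth_proj (kernel_op (Dx n \<eta> \<rho> x)) ** E ** orth_proj (kernel_op (Dx n \<eta> \<rho> x)))}"
proof -
  obtain P where P: "is_orth_proj P (kernel_op (Dx n \<eta> \<rho> x))"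
    using is_orth_proj_kernel_op_exists by blast
  have kernel: "orth_proj (kernel_op (Dx n \<eta> \<rho> x)) = P"
    using P by (rule orth_proj_eq)
  have support: "orth_proj (support_op (Dx n \<eta> \<rho> x)) = mat 1 - P"
    unfolding support_op_eq_perp_kernel using is_orth_proj_complement[OF P] by (rule orth_proj_eq)
  have "Mset n \<eta> \<rho> x = {E. psd E \<and> E ** (mat 1 - P) = 0}"
    using Mset_eq_kernel_proj_fixed[OF assms P] is_orth_proj_mult_complement_eq_0_iff[OF P]
    by (auto dest: psd_hermitian)
  then show ?thesis
    using Mdual_eq_kernel_proj_sandwich_psd[OF assms P] by (simp add: kernel support)
qed

end
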